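(* Let $D\ge 2$, $\eta=\mathrm{diag}(-1,1,\dots,1)$, and let $M$ be an arbitrary invertible real $D\times D$ matrix. If the matrix $\eta M^t\eta M$ has no (real) negative eigenvalues, then $M$ can be written as $M=\lambda s$ with $\lambda$ a real Lorentz matrix (i.e. $\lambda^t\eta\lambda=\eta$) and $s$ a real symmetric matrix.
   Context: $m^t$ denotes the transpose of the matrix $m$. *)

theory Defs
  imports "HOL-Analysis.Analysis"
begin

text \<open>Minkowski metric eta = diag(-1,1,...,1); the time-like direction is the
  least index of the (finite, well-ordered) index type.\<close>
definition minkowski :: "real ^ ('n::{finite,wellorder}) ^ ('n::{finite,wellorder})" where
  "minkowski = (\<chi> i j. if i = j then (if i = (LEAST k. True) then -1 else 1) else 0)"

definition real_eigenvalue :: "real ^ 'n ^ 'n \<Rightarrow> real \<Rightarrow> bool" where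
  "real_eigenvalue A c \<longleftrightarrow> (\<exists>v. v \<noteq> 0 \<and> A *v v = c *\<^sub>R v)"

definition lorentz_matrix :: "real ^ ('n::{finite,wellorder}) ^ ('n::{finite,wellorder}) \<Rightarrow> bool" where
  "lorentz_matrix L \<longleftrightarrow> transpose L ** minkowski ** L = minkowski"

definition symmetric_matrix :: "real ^ 'n ^ 'n \<Rightarrow> bool" where
  "symmetric_matrix S \<longleftrightarrow> transpose S = S"

end

theory Submission
  imports Defs
    "HOL-Computational_Algebra.Fundamental_Theorem_Algebra"
    "HOL-Computational_Algebra.Field_as_Ring"
    "HOL-Computational_Algebra.Polynomial_Factorial"
begin

text \<open>Let \<open>A = \<eta> M\<^sup>t \<eta> M\<close>. Then \<open>\<eta> A = M\<^sup>t \<eta> M\<close> is symmetric, so every polynomial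
  \<open>Y = p(A)\<close> satisfies \<open>Y\<^sup>t \<eta> = \<eta> Y\<close>. We choose \<open>p\<close> with \<open>p(A)\<^sup>2 = A\<close>, i.e.\ with \<open>p\<^sup>2 \<equiv> x\<close> modulo
  the minimal polynomial \<open>q\<close> of \<open>A\<close>. The roots of \<open>q\<close> are eigenvalues, so its real roots are
  positive; hence \<open>x\<close> is a square modulo every irreducible factor of \<open>q\<close> (a linear factor
  \<open>x - a\<close> with \<open>a > 0\<close>, or a quadratic without real roots), and these square roots are
  combined by Hensel lifting and the Chinese remainder theorem. Then \<open>S = \<eta> Y\<close> is symmetric
  with \<open>S\<^sup>t \<eta> S = \<eta> A = M\<^sup>t \<eta> M\<close>, so \<open>L = M S\<^sup>-\<^sup>1\<close> is a Lorentz matrix.\<close>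

lemma square_mod_mult_coprime:
  fixes f g a pf pg :: "'a::euclidean_ring_gcd"
  assumes "coprime f g" and "f dvd pf\<^sup>2 - a" and "g dvd pg\<^sup>2 - a"
  shows "\<exists>p. f * g dvd p\<^sup>2 - a"
proof -
  obtain u v where uv: "u * f + v * g = 1"
    using bezout_coefficients_fst_snd[of f g] assms(1) by auto
  define p where "p = pf * (v * g) + pg * (u * f)"
  have "p - pf = pf * (u * f + v * g - 1) + f * (u * (pg - pf))"
    and "p - pg = pg * (u * f + v * g - 1) + g * (v * (pf - pg))"
    by (simp_all add: p_def algebra_simps)
  then have "p - pf = f * (u * (pg - pf))" and "p - pg = g * (v * (pf - pg))"
    using uv by simp_all
  then have "f dvd p - pf" and "g dvd p - pg"
    by simp_all
  moreover have "p\<^sup>2 - a = (p - pf) * (p + pf) + (pf\<^sup>2 - a)"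
    and "p\<^sup>2 - a = (p - pg) * (p + pg) + (pg\<^sup>2 - a)"
    by (simp_all add: power2_eq_square algebra_simps)
  ultimately have "f dvd p\<^sup>2 - a" and "g dvd p\<^sup>2 - a"
    using assms(2,3) by (metis dvd_add dvd_mult2)+
  with assms(1) show ?thesis
    by (blast intro: divides_mult)
qed

lemma square_mod_lift_square:
  fixes g a p :: "'a::euclidean_ring_gcd"
  assumes "is_unit (2::'a)" and "coprime g a" and "g dvd p\<^sup>2 - a"
  shows "\<exists>p'. g\<^sup>2 dvd p'\<^sup>2 - a"
proof -
  obtain w where w: "p\<^sup>2 - a = g * w"
    using assms(3) by blast
  have "coprime p g"
  proof (rule coprimeI)
    fix e assume "e dvd p" and "e dvd g"
    then have "e dvd p\<^sup>2 - (p\<^sup>2 - a)"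
      using assms(3) by (metis dvd_diff dvd_mult2 power2_eq_square dvd_trans)
    with \<open>e dvd g\<close> show "is_unit e"
      using assms(2) coprime_common_divisor by auto
  qed
  then obtain u v where uv: "u * p + v * g = 1"
    using bezout_coefficients_fst_snd[of p g] by auto
  define h where "h = 1 div 2 * w * u"
  have h2: "2 * h = w * u"
    using assms(1) by (simp add: h_def)
  \<comment> \<open>Newton step: since \<open>2 h p \<equiv> w (mod g)\<close>, replacing \<open>p\<close> by \<open>p - h g\<close> cancels \<open>p\<^sup>2 - a = g w\<close> modulo \<open>g\<^sup>2\<close>.\<close>
  have "(p - h * g)\<^sup>2 - a = g\<^sup>2 * (h\<^sup>2 + w * v)"
  proof -
    have "a = p\<^sup>2 - g * w"
      using w by (simp add: algebra_simps)
    then have "(p - h * g)\<^sup>2 - a = g * w - g * p * (2 * h) + g\<^sup>2 * h\<^sup>2"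
      by (simp add: power2_eq_square algebra_simps)
    also have "\<dots> = g * w * (1 - u * p) + g\<^sup>2 * h\<^sup>2"
      unfolding h2 by (simp add: algebra_simps)
    also have "1 - u * p = v * g"
      using uv by (simp add: algebra_simps)
    finally show ?thesis
      by (simp add: power2_eq_square algebra_simps)
  qed
  then show ?thesis
    by (metis dvd_triv_left)
qed

lemma square_mod_of_prime_factors:
  fixes x a :: "'a::euclidean_ring_gcd"
  assumes "is_unit (2::'a)" and "x \<noteq> 0" and "coprime x a"
    and "\<And>f. prime f \<Longrightarrow> f dvd x \<Longrightarrow> \<exists>p. f dvd p\<^sup>2 - a"
  shows "\<exists>p. x dvd p\<^sup>2 - a"
  using assms(2-4)
proof (induction x rule: prime_divisors_induct)
  case zero
  then show ?case by simp
next
  case (unit x)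
  then show ?case by (meson unit_imp_dvd)
next
  case (factor f x)
  have x_sq: "\<exists>p. x dvd p\<^sup>2 - a"
    using factor.IH factor.prems by simp
  obtain pf where f_sq: "f dvd pf\<^sup>2 - a"
    using factor.hyps factor.prems(3)[of f] by (meson dvd_triv_left)
  show ?case
  proof (cases "f dvd x")
    case True
    have "coprime x a"
      using factor.prems(2) by simp
    then obtain p where "x\<^sup>2 dvd p\<^sup>2 - a"
      using square_mod_lift_square[OF assms(1)] x_sq by blast
    moreover have "f * x dvd x\<^sup>2"
      using True by (simp add: power2_eq_square)
    ultimately show ?thesis
      using dvd_trans by blast
  next
    case False
    then have "coprime f x"
      using factor.hyps prime_imp_coprime by blast
    then show ?thesis
      using square_mod_mult_coprime f_sq x_sq by blast
  qed
qed

lemma map_poly_of_real_add: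
  "map_poly (of_real :: real \<Rightarrow> complex) (p + q) = map_poly of_real p + map_poly of_real q"
  by (intro poly_eqI) (simp add: coeff_map_poly)

lemma map_poly_of_real_mult:
  "map_poly (of_real :: real \<Rightarrow> complex) (p * q) = map_poly of_real p * map_poly of_real q"
  by (induction p) (simp_all add: map_poly_pCons map_poly_smult map_poly_of_real_add)

lemma poly_map_poly_of_real:
  "poly (map_poly (of_real :: real \<Rightarrow> complex) p) (of_real x) = of_real (poly p x)"
  by (induction p) (auto simp: map_poly_pCons)

lemma real_poly_degree_le_1_nonreal_root:
  fixes r :: "real poly"
  assumes "degree r \<le> 1" and "poly (map_poly of_real r) z = 0" and "Im z \<noteq> 0"
  shows "r = 0"
proof -
  have r: "r = [:coeff r 0, coeff r 1:]"
    using assms(1) by (intro poly_eqI) (auto simp: coeff_pCons coeff_eq_0 split: nat.split)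
  have "of_real (coeff r 0) + z * of_real (coeff r 1) = 0"
    using assms(2) by (subst (asm) r) (simp add: map_poly_pCons)
  then have "coeff r 0 = 0" and "coeff r 1 = 0"
    using assms(3) by (auto simp: complex_eq_iff)
  then show ?thesis
    by (subst r) simp
qed

lemma conjugate_pair_dvd:
  fixes f :: "real poly"
  assumes "poly (map_poly of_real f) z = 0" and "Im z \<noteq> 0"
  shows "[:(Re z)\<^sup>2 + (Im z)\<^sup>2, -2 * Re z, 1:] dvd f"
proof -
  define g :: "real poly" where "g = [:(Re z)\<^sup>2 + (Im z)\<^sup>2, -2 * Re z, 1:]"
  have "poly (map_poly of_real g) z = 0"
    by (simp add: g_def map_poly_pCons complex_eq_iff power2_eq_square algebra_simps)
  moreover have "f = g * (f div g) + f mod g"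
    by simp
  ultimately have "poly (map_poly of_real (f mod g)) z = 0"
    using assms(1) by (metis map_poly_of_real_add map_poly_of_real_mult poly_add poly_mult
        mult_zero_left add_0)
  moreover have "degree (f mod g) \<le> 1"
    using degree_mod_less'[of g f] by (cases "f mod g = 0") (auto simp: g_def)
  ultimately have "f mod g = 0"
    using real_poly_degree_le_1_nonreal_root assms(2) by blast
  then show ?thesis
    by (simp add: g_def mod_eq_0_iff_dvd)
qed

lemma linear_square_mod_X:
  fixes a :: real
  assumes "a > 0"
  shows "[:-a, 1:] dvd [:sqrt a:]\<^sup>2 - [:0, 1:]"
proof -
  have "[:sqrt a:]\<^sup>2 - [:0, 1:] = smult (-1) [:-a, 1:]"
    using assms by (simp add: power2_eq_square)
  then show ?thesis
    by (metis dvd_smult dvd_refl)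
qed

lemma quadratic_square_mod_X:
  fixes b c :: real
  assumes "b\<^sup>2 < 4 * c"
  shows "\<exists>p. [:c, b, 1:] dvd p\<^sup>2 - [:0, 1:]"
proof -
  define r where "r = sqrt c"
  have "c > 0"
    using assms by (smt (verit) zero_le_power2)
  then have rr: "r * r = c"
    by (simp add: r_def)
  have "\<bar>b\<bar> < 2 * r"
    using real_sqrt_less_mono[OF assms]
    by (simp add: r_def real_sqrt_mult)
  then have "2 * r - b > 0"
    by linarith
  \<comment> \<open>With \<open>\<alpha>\<^sup>2 (2 r - b) = 1\<close>, the square of \<open>\<alpha> (x + r)\<close> is \<open>x + \<alpha>\<^sup>2 (x\<^sup>2 + b x + c)\<close>.\<close>
  define \<alpha> where "\<alpha> = 1 / sqrt (2 * r - b)"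
  have \<alpha>: "\<alpha> * \<alpha> * (2 * r - b) = 1"
    using \<open>2 * r - b > 0\<close> by (simp add: \<alpha>_def)
  have "[:\<alpha> * r, \<alpha>:]\<^sup>2 - [:0, 1:] = smult (\<alpha> * \<alpha>) [:c, b, 1:]"
    using rr \<alpha> by (simp add: power2_eq_square algebra_simps)
  then show ?thesis
    by (metis dvd_smult dvd_refl)
qed

lemma prime_factor_square_mod_X:
  fixes f q :: "real poly"
  assumes "prime f" and "f dvd q" and roots: "\<And>a. poly q a = 0 \<Longrightarrow> a > 0"
  shows "\<exists>p. f dvd p\<^sup>2 - [:0, 1:]"
proof -
  have irr: "irreducible f"
    using assms(1) by (simp add: prime_elem_imp_irreducible)
  have f_dvd: "f dvd g" if "g dvd f" and "degree g > 0" for g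
    using irreducibleD'[OF irr that(1)] that(2)
    by (metis is_unit_iff_degree gr_implies_not0 degree_0)
  have "f \<noteq> 0" and "\<not> is_unit f"
    using assms(1) by auto
  then have "degree (map_poly (of_real :: real \<Rightarrow> complex) f) > 0"
    by (simp add: degree_map_poly is_unit_iff_degree)
  then have "\<nexists>a l. a \<noteq> 0 \<and> l = 0 \<and> map_poly (of_real :: real \<Rightarrow> complex) f = pCons a l"
    by (metis degree_pCons_0 less_irrefl)
  then obtain z :: complex where z: "poly (map_poly of_real f) z = 0"
    using fundamental_theorem_of_algebra_alt by blast
  show ?thesis
  proof (cases "Im z = 0")
    case True
    then have "of_real (poly f (Re z)) = (0 :: complex)"
      using z poly_map_poly_of_real[of f "Re z"] by (simp add: complex_is_Real_iff)
    then have "poly f (Re z) = 0"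
      by simp
    then have "[:-Re z, 1:] dvd f" and "Re z > 0"
      using assms(2) roots poly_eq_0_iff_dvd by (auto dest: dvd_trans)
    then have "f dvd [:-Re z, 1:]"
      using f_dvd by simp
    then show ?thesis
      using linear_square_mod_X[OF \<open>Re z > 0\<close>] dvd_trans by blast
  next
    case False
    let ?b = "-2 * Re z" and ?c = "(Re z)\<^sup>2 + (Im z)\<^sup>2"
    have "?b\<^sup>2 < 4 * ?c"
      using False by (simp add: power2_eq_square) (metis not_real_square_gt_zero)
    moreover have "f dvd [:?c, ?b, 1:]"
      using f_dvd conjugate_pair_dvd[OF z False] by simp
    ultimately show ?thesis
      using quadratic_square_mod_X by (meson dvd_trans)
  qed
qed

lemma square_mod_X:
  fixes q :: "real poly"
  assumes "q \<noteq> 0" and roots: "\<And>a. poly q a = 0 \<Longrightarrow> a > 0"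
  shows "\<exists>p. q dvd p\<^sup>2 - [:0, 1:]"
proof -
  have "prime_elem [:0, 1 :: real:]"
    by (rule prime_elem_linear_field_poly) simp
  moreover have "\<not> [:0, 1:] dvd q"
    using roots[of 0] by (auto simp: poly_eq_0_iff_dvd[symmetric])
  ultimately have "coprime q [:0, 1:]"
    using prime_elem_imp_coprime coprime_commute by blast
  moreover have "is_unit (2 :: real poly)"
    by (simp add: is_unit_iff_degree)
  ultimately show ?thesis
    using square_mod_of_prime_factors assms(1) prime_factor_square_mod_X roots by blast
qed

definition poly_mat :: "real poly \<Rightarrow> real^'n^'n \<Rightarrow> real^'n^'n" where
  "poly_mat p A = fold_coeffs (\<lambda>a B. a *\<^sub>R mat 1 + A ** B) p 0"

lemma poly_mat_0 [simp]: "poly_mat 0 A = 0"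
  by (simp add: poly_mat_def)

lemma poly_mat_pCons [simp]: "poly_mat (pCons a p) A = a *\<^sub>R mat 1 + A ** poly_mat p A"
  by (cases "p = 0"; cases "a = 0") (auto simp: poly_mat_def)

lemma matrix_add_rdistrib: "((A :: 'a::semiring_1^'n^'m) + B) ** C = A ** C + B ** C"
  by (simp add: matrix_matrix_mult_def vec_eq_iff sum.distrib distrib_right)

lemma transpose_add: "transpose ((A :: 'a::plus^'n^'m) + B) = transpose A + transpose B"
  by (simp add: transpose_def vec_eq_iff)

lemma poly_mat_add: "poly_mat (p + q) A = poly_mat p A + poly_mat q A"
proof (induction p arbitrary: q)
  case (pCons a p)
  then show ?case
    by (cases q) (simp add: matrix_add_ldistrib scaleR_add_left algebra_simps)
qed simp

lemma poly_mat_smult: "poly_mat (smult c p) A = c *\<^sub>R poly_mat p A"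
  by (induction p) (simp_all add: matrix_scalar_ac scalar_matrix_assoc[symmetric] scaleR_add_right)

lemma poly_mat_mult: "poly_mat (p * q) A = poly_mat p A ** poly_mat q A"
  by (induction p) (simp_all add: poly_mat_add poly_mat_smult matrix_add_rdistrib
      scalar_matrix_assoc[symmetric] matrix_mul_assoc)

lemma poly_mat_diff: "poly_mat (p - q) A = poly_mat p A - poly_mat q A"
  using poly_mat_add[of "p - q" q A] by (simp add: algebra_simps)

lemma poly_mat_sum: "finite I \<Longrightarrow> poly_mat (\<Sum>i\<in>I. f i) A = (\<Sum>i\<in>I. poly_mat (f i) A)"
  by (induction I rule: finite_induct) (simp_all add: poly_mat_add)

lemma poly_mat_commute: "poly_mat p A ** A = A ** poly_mat p A"
  by (induction p) (simp_all add: matrix_add_rdistrib matrix_add_ldistrib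
      scalar_matrix_assoc[symmetric] matrix_scalar_ac matrix_mul_assoc[symmetric])

lemma poly_mat_transpose_intertwine:
  assumes "transpose A ** E = E ** A"
  shows "transpose (poly_mat p A) ** E = E ** poly_mat p A"
proof (induction p)
  case 0
  then show ?case
    by (simp add: transpose_def vec_eq_iff matrix_matrix_mult_def)
next
  case (pCons a p)
  let ?P = "poly_mat p A"
  have "transpose (poly_mat (pCons a p) A) ** E = a *\<^sub>R E + transpose ?P ** (transpose A ** E)"
    by (simp add: transpose_add transpose_scalar matrix_transpose_mul matrix_add_rdistrib
        scalar_matrix_assoc[symmetric] matrix_mul_assoc)
  also have "\<dots> = a *\<^sub>R E + E ** (?P ** A)"
    by (simp add: assms pCons.IH matrix_mul_assoc)
  also have "\<dots> = E ** poly_mat (pCons a p) A"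
    by (simp add: poly_mat_commute matrix_add_ldistrib matrix_scalar_ac matrix_mul_assoc)
  finally show ?case .
qed

lemma poly_mat_monom: "poly_mat (monom c i) A = c *\<^sub>R poly_mat (monom 1 i) A"
  using poly_mat_smult[of c "monom 1 i" A] by (simp add: smult_monom)

lemma ex_poly_mat_eq_0: "\<exists>q. q \<noteq> 0 \<and> poly_mat q (A :: real^'n^'n) = 0"
proof -
  define N where "N = DIM(real^'n^'n)"
  define P where "P i = poly_mat (monom 1 i) A" for i
  show ?thesis
  proof (cases "inj_on P {..N}")
    case False
    then obtain i j where "i \<noteq> j" and "P i = P j"
      unfolding inj_on_def by blast
    have "monom 1 i \<noteq> (monom 1 j :: real poly)"
      using \<open>i \<noteq> j\<close> by (simp only: monom_eq_iff') simp
    then have "monom 1 i - monom 1 j \<noteq> (0 :: real poly)"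
      by (simp only: right_minus_eq not_False_eq_True)
    moreover have "poly_mat (monom 1 i - monom 1 j) A = 0"
      using \<open>P i = P j\<close> by (simp add: poly_mat_diff P_def)
    ultimately show ?thesis
      by (rule exI[where x = "monom 1 i - monom 1 j", OF conjI])
  next
    case True
    \<comment> \<open>\<open>N + 1\<close> distinct powers of \<open>A\<close> in a space of dimension \<open>N\<close> are dependent.\<close>
    define S where "S = P ` {..N}"
    have "finite S" and "card S = N + 1"
      using True by (simp_all add: S_def card_image)
    then have "dependent S"
      using independent_bound[of S] by (auto simp: N_def)
    then obtain u where u: "\<exists>v\<in>S. u v \<noteq> 0" and "(\<Sum>v\<in>S. u v *\<^sub>R v) = 0"
      using real_vector.dependent_finite[OF \<open>finite S\<close>] by blast
    define q where "q = (\<Sum>i\<le>N. monom (u (P i)) i)"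
    have "poly_mat q A = (\<Sum>i\<le>N. u (P i) *\<^sub>R P i)"
      unfolding q_def P_def by (simp add: poly_mat_sum poly_mat_monom[of "u _"])
    also have "\<dots> = (\<Sum>v\<in>S. u v *\<^sub>R v)"
      unfolding S_def using sum.reindex[OF True, of "\<lambda>v. u v *\<^sub>R v"] by simp
    also have "\<dots> = 0"
      by fact
    finally have "poly_mat q A = 0" .
    moreover obtain i where "i \<le> N" and "u (P i) \<noteq> 0"
      using u S_def by auto
    then have "coeff q i \<noteq> 0"
      by (simp add: q_def coeff_sum coeff_monom)
    then have "q \<noteq> 0"
      by auto
    ultimately show ?thesis
      by blast
  qed
qed

lemma real_eigenvalue_if_root_of_minimal_annihilator:
  fixes A :: "real^'n^'n"
  assumes "poly_mat q A = 0"
    and minimal: "\<And>q'. q' \<noteq> 0 \<Longrightarrow> poly_mat q' A = 0 \<Longrightarrow> degree q \<le> degree q'"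
    and "q \<noteq> 0" and "poly q c = 0"
  shows "real_eigenvalue A c"
proof -
  obtain r where qr: "q = [:-c, 1:] * r"
    using assms(4) poly_eq_0_iff_dvd by blast
  have "r \<noteq> 0"
    using assms(3) qr by auto
  have "degree q = degree [:-c, 1:] + degree r"
    unfolding qr by (rule degree_mult_eq) (use \<open>r \<noteq> 0\<close> in auto)
  have "poly_mat r A \<noteq> 0"
  proof
    assume "poly_mat r A = 0"
    with minimal[OF \<open>r \<noteq> 0\<close>] have "degree q \<le> degree r" .
    with \<open>degree q = degree [:-c, 1:] + degree r\<close> show False
      by simp
  qed
  then obtain x where x: "poly_mat r A *v x \<noteq> 0"
    using matrix_eq[of "poly_mat r A" 0] by auto
  have "A ** poly_mat r A - c *\<^sub>R poly_mat r A = poly_mat q A"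
    by (simp add: qr poly_mat_diff poly_mat_smult)
  then have "A ** poly_mat r A = c *\<^sub>R poly_mat r A"
    using assms(1) by simp
  then have "A *v (poly_mat r A *v x) = c *\<^sub>R (poly_mat r A *v x)"
    by (simp add: matrix_vector_mul_assoc scaleR_matrix_vector_assoc)
  with x show ?thesis
    unfolding real_eigenvalue_def by blast
qed

lemma real_eigenvalue_nonzero_if_invertible:
  assumes "invertible A" and "real_eigenvalue A c"
  shows "c \<noteq> 0"
proof
  assume "c = 0"
  with assms(2) obtain v where "v \<noteq> 0" and "A *v v = A *v 0"
    by (auto simp: real_eigenvalue_def)
  then show False
    using inj_matrix_vector_mult[OF assms(1)] by (meson injD)
qed

lemma poly_mat_sqrt:
  fixes A :: "real^'n^'n"
  assumes "\<And>c. real_eigenvalue A c \<Longrightarrow> c > 0"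
  shows "\<exists>p. poly_mat p A ** poly_mat p A = A"
proof -
  obtain q0 where "q0 \<noteq> 0 \<and> poly_mat q0 A = 0"
    using ex_poly_mat_eq_0 by blast
  then obtain q where q: "q \<noteq> 0" "poly_mat q A = 0"
    and minimal: "\<And>q'. q' \<noteq> 0 \<and> poly_mat q' A = 0 \<Longrightarrow> degree q \<le> degree q'"
    using ex_has_least_nat[of "\<lambda>q. q \<noteq> 0 \<and> poly_mat q A = 0" q0 degree] by blast
  have "c > 0" if "poly q c = 0" for c
    using assms real_eigenvalue_if_root_of_minimal_annihilator[OF q(2) _ q(1) that] minimal
    by blast
  then obtain p h where "p\<^sup>2 - [:0, 1:] = q * h"
    using square_mod_X[OF q(1)] by blast
  then have "poly_mat (p\<^sup>2 - [:0, 1:]) A = 0"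
    by (simp add: poly_mat_mult q(2))
  then show ?thesis
    by (auto simp: poly_mat_diff poly_mat_mult power2_eq_square)
qed

lemma minkowski_transpose: "transpose minkowski = minkowski"
  by (simp add: minkowski_def transpose_def vec_eq_iff)

lemma minkowski_mult_self:
  "(minkowski :: real^('n::{finite,wellorder})^('n::{finite,wellorder})) ** minkowski = mat 1"
proof -
  define \<eta> :: "real^('n::{finite,wellorder})^('n::{finite,wellorder})" where "\<eta> = minkowski"
  have "(\<eta> ** \<eta>) $ i $ j = mat 1 $ i $ j" for i j
  proof -
    have "(\<eta> ** \<eta>) $ i $ j = (\<Sum>k\<in>UNIV. if k = i then \<eta> $ i $ i * \<eta> $ k $ j else 0)"
      unfolding matrix_matrix_mult_def vec_lambda_beta
      by (rule sum.cong) (auto simp: \<eta>_def minkowski_def)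
    also have "\<dots> = \<eta> $ i $ i * \<eta> $ i $ j"
      by simp
    also have "\<dots> = mat 1 $ i $ j"
      by (simp add: \<eta>_def minkowski_def mat_def)
    finally show ?thesis .
  qed
  then show ?thesis
    by (simp add: \<eta>_def vec_eq_iff)
qed

lemma minkowski_mult_self_right:
  fixes B :: "real^('n::{finite,wellorder})^'m"
  shows "B ** minkowski ** minkowski = B"
  by (simp add: minkowski_mult_self flip: matrix_mul_assoc)

lemma invertible_minkowski:
  "invertible (minkowski :: real^('n::{finite,wellorder})^('n::{finite,wellorder}))"
  using minkowski_mult_self invertible_def by blast

lemma lorentz_factor_if_congruent:
  fixes M S :: "real^('n::{finite,wellorder})^('n::{finite,wellorder})"
  assumes "transpose M ** minkowski ** M = transpose S ** minkowski ** S" and "invertible S"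
  shows "\<exists>L. lorentz_matrix L \<and> M = L ** S"
proof -
  obtain S' where S': "S ** S' = mat 1" "S' ** S = mat 1"
    using assms(2) unfolding invertible_def by blast
  have "transpose (M ** S') ** minkowski ** (M ** S')
        = transpose S' ** (transpose M ** minkowski ** M) ** S'"
    by (simp add: matrix_transpose_mul matrix_mul_assoc)
  also have "\<dots> = transpose (S ** S') ** minkowski ** (S ** S')"
    by (simp add: assms(1) matrix_transpose_mul matrix_mul_assoc)
  finally have "lorentz_matrix (M ** S')"
    by (simp add: lorentz_matrix_def S')
  moreover have "M = (M ** S') ** S"
    by (simp add: S' flip: matrix_mul_assoc)
  ultimately show ?thesis
    by blast
qed

lemma lorentz_symmetric_factorization:
  fixes M Y :: "real^('n::{finite,wellorder})^('n::{finite,wellorder})"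
  assumes "invertible M"
    and Y: "Y ** Y = minkowski ** transpose M ** minkowski ** M"
    and "transpose Y ** minkowski = minkowski ** Y"
  shows "\<exists>L S. lorentz_matrix L \<and> symmetric_matrix S \<and> M = L ** S"
proof -
  define S where "S = minkowski ** Y"
  have "transpose S = S"
    using assms(3) by (simp add: S_def matrix_transpose_mul minkowski_transpose)
  then have "transpose S ** minkowski ** S = minkowski ** (Y ** Y)"
    by (simp add: S_def minkowski_mult_self_right matrix_mul_assoc)
  also have "\<dots> = transpose M ** minkowski ** M"
    by (simp add: Y minkowski_mult_self matrix_mul_assoc)
  finally have "transpose M ** minkowski ** M = transpose S ** minkowski ** S" ..
  moreover have "det (Y ** Y) \<noteq> 0"
    using assms(1) invertible_minkowski
    by (simp only: Y invertible_det_nz det_mul det_transpose) simp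
  then have "invertible S"
    using invertible_minkowski by (simp add: S_def invertible_det_nz det_mul)
  ultimately obtain L where "lorentz_matrix L" and "M = L ** S"
    using lorentz_factor_if_congruent by blast
  with \<open>transpose S = S\<close> show ?thesis
    by (auto simp: symmetric_matrix_def)
qed

theorem proposition4:
  fixes M :: "real ^ ('n::{finite,wellorder}) ^ ('n::{finite,wellorder})"
  assumes "CARD('n) \<ge> 2"
    and "invertible M"
    and "\<not> (\<exists>c<0. real_eigenvalue (minkowski ** transpose M ** minkowski ** M) c)"
  shows "\<exists>L S. lorentz_matrix L \<and> symmetric_matrix S \<and> M = L ** S"
proof -
  define A where "A = minkowski ** transpose M ** minkowski ** M"
  have "invertible A"
    using assms(2) invertible_minkowski
    by (simp add: A_def invertible_det_nz det_mul det_transpose)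
  then have "real_eigenvalue A c \<Longrightarrow> c > 0" for c
    using assms(3) real_eigenvalue_nonzero_if_invertible by (force simp: A_def)
  then obtain p where "poly_mat p A ** poly_mat p A = A"
    using poly_mat_sqrt by blast
  moreover have "transpose A ** minkowski = minkowski ** A"
    by (simp add: A_def matrix_transpose_mul minkowski_transpose minkowski_mult_self
        minkowski_mult_self_right matrix_mul_assoc)
  ultimately show ?thesis
    using lorentz_symmetric_factorization assms(2) poly_mat_transpose_intertwine
    by (metis A_def)
qed

end
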